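(* Let $R$ be a DT ring with $2\in U(R)$. Then $\Delta(R)$ is a two-sided ideal of $R$, and $\Delta(R)=J(R)$.
   Context: All rings are associative with identity; $J(R)$ is the Jacobson radical, $U(R)$ the group of units. $\Delta(R)=\{x\in R: x+u\in U(R)\text{ for all }u\in U(R)\}$. $\mathrm{Tr}(R)=\{x\in R: x^3=x\}$. A ring $R$ is a DT ring if every $r\in R$ can be written $r=e+d$ with $e\in\mathrm{Tr}(R)$ and $d\in\Delta(R)$. *)

theory Defs
  imports Main
begin

definition unit_group :: "'a::ring_1 set" where
  "unit_group = {u. \<exists>v. u * v = 1 \<and> v * u = 1}"

definition Delta :: "'a::ring_1 set" where
  "Delta = {x. \<forall>u\<in>unit_group. x + u \<in> unit_group}"

definition Tr :: "'a::ring_1 set" where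
  "Tr = {x. x ^ 3 = x}"

definition DT_ring :: "'a::ring_1 itself \<Rightarrow> bool" where
  "DT_ring _ \<longleftrightarrow> (\<forall>r::'a. \<exists>e d. r = e + d \<and> e \<in> Tr \<and> d \<in> Delta)"

definition left_ideal :: "'a::ring_1 set \<Rightarrow> bool" where
  "left_ideal I \<longleftrightarrow> 0 \<in> I \<and> (\<forall>x\<in>I. \<forall>y\<in>I. x + y \<in> I) \<and> (\<forall>x\<in>I. - x \<in> I)
     \<and> (\<forall>r. \<forall>x\<in>I. r * x \<in> I)"

definition two_sided_ideal :: "'a::ring_1 set \<Rightarrow> bool" where
  "two_sided_ideal I \<longleftrightarrow> left_ideal I \<and> (\<forall>r. \<forall>x\<in>I. x * r \<in> I)"

definition maximal_left_ideal :: "'a::ring_1 set \<Rightarrow> bool" where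
  "maximal_left_ideal M \<longleftrightarrow> left_ideal M \<and> M \<noteq> UNIV \<and>
     (\<forall>I. left_ideal I \<and> M \<subseteq> I \<and> I \<noteq> UNIV \<longrightarrow> I = M)"

definition jacobson :: "'a::ring_1 set" where
  "jacobson = \<Inter> {M. maximal_left_ideal M}"

end

theory Submission
  imports Defs
begin

text \<open>
  \<Delta>(R) is always an additive subgroup stable under multiplication by units. When 2 is a unit
  it is also stable under multiplication by an idempotent f, because 2f - 1 is a unit and
  2fx = x + (2f - 1)x. A tripotent e is u - 1 + e^2 with u = e + 1 - e^2 a unit
  (u^2 = 1) and e^2 idempotent, and an element of \<Delta> is (1 + d) - 1 with 1 + d a unit;
  so in a DT ring every element multiplies \<Delta> into itself from both sides. Finally
  J(R) \<subseteq> \<Delta>(R) in any ring, and conversely an element x of \<Delta> outside a maximal left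
  ideal M would give 1 = m + rx with m = 1 - rx a unit in M.
\<close>

lemma unit_groupI: "(u::'a::ring_1) * v = 1 \<Longrightarrow> v * u = 1 \<Longrightarrow> u \<in> unit_group"
  unfolding unit_group_def by blast

lemma unit_groupE:
  assumes "(u::'a::ring_1) \<in> unit_group"
  obtains v where "v \<in> unit_group" "u * v = 1" "v * u = 1"
  using assms unfolding unit_group_def by blast

lemma one_in_unit_group: "(1::'a::ring_1) \<in> unit_group"
  by (rule unit_groupI[of 1 1]) simp_all

lemma square_eq_one_in_unit_group: "(u::'a::ring_1) * u = 1 \<Longrightarrow> u \<in> unit_group"
  by (rule unit_groupI)

lemma unit_group_mult:
  assumes "(u::'a::ring_1) \<in> unit_group" "w \<in> unit_group"
  shows "u * w \<in> unit_group"
proof -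
  obtain v where v: "u * v = 1" "v * u = 1" using assms(1) by (rule unit_groupE)
  obtain z where z: "w * z = 1" "z * w = 1" using assms(2) by (rule unit_groupE)
  have "(u * w) * (z * v) = u * ((w * z) * v)" "(z * v) * (u * w) = z * ((v * u) * w)"
    by (simp_all add: mult.assoc)
  then show ?thesis by (intro unit_groupI[of _ "z * v"]) (simp_all add: v z)
qed

lemma unit_group_uminus:
  assumes "(u::'a::ring_1) \<in> unit_group"
  shows "- u \<in> unit_group"
proof -
  obtain v where "u * v = 1" "v * u = 1" using assms by (rule unit_groupE)
  then show ?thesis by (intro unit_groupI[of _ "- v"]) simp_all
qed

lemma left_idealI:
  assumes "0 \<in> I" "\<And>x y. x \<in> I \<Longrightarrow> y \<in> I \<Longrightarrow> x + y \<in> I"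
    "\<And>x. x \<in> I \<Longrightarrow> - x \<in> I" "\<And>r x. x \<in> I \<Longrightarrow> r * x \<in> I"
  shows "left_ideal (I::'a::ring_1 set)"
  using assms unfolding left_ideal_def by blast

lemma
  assumes "left_ideal (I::'a::ring_1 set)"
  shows left_ideal_zero: "0 \<in> I"
    and left_ideal_add: "x \<in> I \<Longrightarrow> y \<in> I \<Longrightarrow> x + y \<in> I"
    and left_ideal_uminus: "x \<in> I \<Longrightarrow> - x \<in> I"
    and left_ideal_mult_left: "x \<in> I \<Longrightarrow> r * x \<in> I"
  using assms unfolding left_ideal_def by blast+

lemma left_ideal_unit_eq_UNIV:
  assumes I: "left_ideal (I::'a::ring_1 set)" and "u \<in> I" "u \<in> unit_group"
  shows "I = UNIV"
proof -
  obtain v where v: "v * u = 1" using assms(3) by (rule unit_groupE)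
  have "1 \<in> I" using left_ideal_mult_left[OF I \<open>u \<in> I\<close>, of v] by (simp only: v)
  from left_ideal_mult_left[OF I this] show ?thesis by (metis UNIV_eq_I mult_1_right)
qed

lemma left_ideal_Union_chain:
  assumes "C \<noteq> {}" and ideals: "\<And>I. I \<in> C \<Longrightarrow> left_ideal (I::'a::ring_1 set)"
    and chain: "\<And>I J. I \<in> C \<Longrightarrow> J \<in> C \<Longrightarrow> I \<subseteq> J \<or> J \<subseteq> I"
  shows "left_ideal (\<Union>C)"
proof (rule left_idealI)
  obtain I where "I \<in> C" using assms(1) by blast
  then show "0 \<in> \<Union>C" using left_ideal_zero[OF ideals] by blast
next
  fix x y assume "x \<in> \<Union>C" "y \<in> \<Union>C"
  then obtain I J where "I \<in> C" "J \<in> C" "x \<in> I" "y \<in> J" by blast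
  then obtain K where "K \<in> C" "x \<in> K" "y \<in> K" using chain by blast
  then show "x + y \<in> \<Union>C" using left_ideal_add[OF ideals] by blast
next
  fix x assume "x \<in> \<Union>C"
  then obtain I where "I \<in> C" "x \<in> I" by blast
  then show "- x \<in> \<Union>C" using left_ideal_uminus[OF ideals] by blast
next
  fix r x assume "x \<in> \<Union>C"
  then obtain I where "I \<in> C" "x \<in> I" by blast
  then show "r * x \<in> \<Union>C" using left_ideal_mult_left[OF ideals] by blast
qed

lemma maximal_left_ideal_exists:
  assumes "left_ideal (I::'a::ring_1 set)" "I \<noteq> UNIV"
  obtains M where "maximal_left_ideal M" "I \<subseteq> M"
proof -
  let ?P = "{J. left_ideal J \<and> J \<noteq> UNIV \<and> I \<subseteq> J}"
  have "\<exists>M\<in>?P. \<forall>J\<in>?P. M \<subseteq> J \<longrightarrow> J = M"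
  proof (rule subset_Zorn_nonempty)
    show "?P \<noteq> {}" using assms by blast
  next
    fix C assume C: "C \<noteq> {}" "subset.chain ?P C"
    then have P: "\<And>J. J \<in> C \<Longrightarrow> left_ideal J \<and> J \<noteq> UNIV \<and> I \<subseteq> J"
      and chain: "\<And>I J. I \<in> C \<Longrightarrow> J \<in> C \<Longrightarrow> I \<subseteq> J \<or> J \<subseteq> I"
      unfolding subset.chain_def by blast+
    have "left_ideal (\<Union>C)" using C(1) P chain by (intro left_ideal_Union_chain) blast+
    moreover have "1 \<notin> J" if "J \<in> C" for J
      using P that left_ideal_unit_eq_UNIV[OF _ _ one_in_unit_group] by blast
    then have "\<Union>C \<noteq> UNIV" by blast
    moreover have "I \<subseteq> \<Union>C" using C(1) P by blast
    ultimately show "\<Union>C \<in> ?P" by blast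
  qed
  then obtain M where "M \<in> ?P" "\<forall>J\<in>?P. M \<subseteq> J \<longrightarrow> J = M" by blast
  then have "maximal_left_ideal M" "I \<subseteq> M" unfolding maximal_left_ideal_def by blast+
  then show ?thesis by (rule that)
qed

lemma left_ideal_principal: "left_ideal (range (\<lambda>r. r * (a::'a::ring_1)))"
proof (rule left_idealI)
  show "0 \<in> range (\<lambda>r. r * a)" by (rule range_eqI[of _ _ 0]) simp
next
  fix x y assume "x \<in> range (\<lambda>r. r * a)" "y \<in> range (\<lambda>r. r * a)"
  then obtain r s where "x = r * a" "y = s * a" by blast
  then show "x + y \<in> range (\<lambda>r. r * a)" by (intro range_eqI[of _ _ "r + s"]) (simp add: distrib_right)
next
  fix x assume "x \<in> range (\<lambda>r. r * a)"
  then obtain r where "x = r * a" by blast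
  then show "- x \<in> range (\<lambda>r. r * a)" by (intro range_eqI[of _ _ "- r"]) simp
next
  fix s x assume "x \<in> range (\<lambda>r. r * a)"
  then obtain r where "x = r * a" by blast
  then show "s * x \<in> range (\<lambda>r. r * a)" by (intro range_eqI[of _ _ "s * r"]) (simp add: mult.assoc)
qed

lemma left_ideal_add_principal:
  assumes M: "left_ideal (M::'a::ring_1 set)"
  shows "left_ideal {m + r * x | m r. m \<in> M}"
proof (rule left_idealI)
  have "0 + 0 * x \<in> {m + r * x | m r. m \<in> M}" using left_ideal_zero[OF M] by blast
  then show "0 \<in> {m + r * x | m r. m \<in> M}" by simp
next
  fix a b assume "a \<in> {m + r * x | m r. m \<in> M}" "b \<in> {m + r * x | m r. m \<in> M}"
  then obtain m r n s where "a = m + r * x" "b = n + s * x" "m \<in> M" "n \<in> M" by blast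
  moreover from this have "a + b = (m + n) + (r + s) * x" by (simp add: algebra_simps)
  ultimately show "a + b \<in> {m + r * x | m r. m \<in> M}" using left_ideal_add[OF M] by blast
next
  fix a assume "a \<in> {m + r * x | m r. m \<in> M}"
  then obtain m r where "a = m + r * x" "m \<in> M" by blast
  moreover from this have "- a = - m + (- r) * x" by simp
  ultimately show "- a \<in> {m + r * x | m r. m \<in> M}" using left_ideal_uminus[OF M] by blast
next
  fix s a assume "a \<in> {m + r * x | m r. m \<in> M}"
  then obtain m r where "a = m + r * x" "m \<in> M" by blast
  moreover from this have "s * a = s * m + (s * r) * x" by (simp add: algebra_simps)
  ultimately show "s * a \<in> {m + r * x | m r. m \<in> M}" using left_ideal_mult_left[OF M] by blast
qed

lemma zero_in_Delta: "(0::'a::ring_1) \<in> Delta"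
  unfolding Delta_def by simp

lemma Delta_add: "(x::'a::ring_1) \<in> Delta \<Longrightarrow> y \<in> Delta \<Longrightarrow> x + y \<in> Delta"
  unfolding Delta_def by (simp add: add.assoc)

lemma Delta_uminus:
  assumes "(x::'a::ring_1) \<in> Delta"
  shows "- x \<in> Delta"
  unfolding Delta_def
proof (intro CollectI ballI)
  fix u :: 'a assume "u \<in> unit_group"
  then have "x + - u \<in> unit_group"
    using assms unit_group_uminus unfolding Delta_def by blast
  from unit_group_uminus[OF this] show "- x + u \<in> unit_group" by simp
qed

lemma Delta_diff: "(x::'a::ring_1) \<in> Delta \<Longrightarrow> y \<in> Delta \<Longrightarrow> x - y \<in> Delta"
  using Delta_add[OF _ Delta_uminus] by fastforce

lemma one_add_Delta_in_unit_group: "(d::'a::ring_1) \<in> Delta \<Longrightarrow> 1 + d \<in> unit_group"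
  unfolding Delta_def using one_in_unit_group by (auto simp: add.commute)

lemma unit_mult_Delta:
  assumes u: "(u::'a::ring_1) \<in> unit_group" and x: "x \<in> Delta"
  shows "u * x \<in> Delta"
  unfolding Delta_def
proof (intro CollectI ballI)
  fix w :: 'a assume w: "w \<in> unit_group"
  obtain v where v: "v \<in> unit_group" "u * v = 1" using u by (rule unit_groupE)
  have "x + v * w \<in> unit_group" using x unit_group_mult[OF v(1) w] unfolding Delta_def by blast
  from unit_group_mult[OF u this] show "u * x + w \<in> unit_group"
    by (simp add: distrib_left v(2) mult.assoc[symmetric])
qed

lemma Delta_mult_unit:
  assumes u: "(u::'a::ring_1) \<in> unit_group" and x: "x \<in> Delta"
  shows "x * u \<in> Delta"
  unfolding Delta_def
proof (intro CollectI ballI)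
  fix w :: 'a assume w: "w \<in> unit_group"
  obtain v where v: "v \<in> unit_group" "v * u = 1" using u by (rule unit_groupE)
  have "x + w * v \<in> unit_group" using x unit_group_mult[OF w v(1)] unfolding Delta_def by blast
  from unit_group_mult[OF this u] show "x * u + w \<in> unit_group"
    by (simp add: distrib_right v(2) mult.assoc)
qed

lemma Delta_halve:
  assumes "(2::'a::ring_1) \<in> unit_group" "2 * x \<in> Delta"
  shows "(x::'a) \<in> Delta"
proof -
  obtain h where h: "h \<in> unit_group" "h * 2 = (1::'a)" using assms(1) by (rule unit_groupE)
  have "h * (2 * x) = x" by (simp add: mult.assoc[symmetric] h(2))
  with unit_mult_Delta[OF h(1) assms(2)] show ?thesis by simp
qed

subsection \<open>Two-sided multipliers of \<Delta>\<close>

definition Delta_multipliers :: "'a::ring_1 set" where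
  "Delta_multipliers = {r. \<forall>x\<in>Delta. r * x \<in> Delta \<and> x * r \<in> Delta}"

lemma Delta_multipliersI:
  "(\<And>x. x \<in> Delta \<Longrightarrow> r * x \<in> Delta \<and> x * r \<in> Delta) \<Longrightarrow> (r::'a::ring_1) \<in> Delta_multipliers"
  unfolding Delta_multipliers_def by blast

lemma Delta_multipliersD:
  "(r::'a::ring_1) \<in> Delta_multipliers \<Longrightarrow> x \<in> Delta \<Longrightarrow> r * x \<in> Delta \<and> x * r \<in> Delta"
  unfolding Delta_multipliers_def by blast

lemma Delta_multipliers_add:
  "(r::'a::ring_1) \<in> Delta_multipliers \<Longrightarrow> s \<in> Delta_multipliers \<Longrightarrow> r + s \<in> Delta_multipliers"
  by (intro Delta_multipliersI)
     (simp add: distrib_left distrib_right Delta_add Delta_multipliersD)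

lemma Delta_multipliers_diff:
  "(r::'a::ring_1) \<in> Delta_multipliers \<Longrightarrow> s \<in> Delta_multipliers \<Longrightarrow> r - s \<in> Delta_multipliers"
  by (intro Delta_multipliersI)
     (simp add: left_diff_distrib right_diff_distrib Delta_diff Delta_multipliersD)

lemma unit_in_Delta_multipliers:
  "(u::'a::ring_1) \<in> unit_group \<Longrightarrow> u \<in> Delta_multipliers"
  by (intro Delta_multipliersI) (simp add: unit_mult_Delta Delta_mult_unit)

lemma idempotent_in_Delta_multipliers:
  assumes two: "(2::'a::ring_1) \<in> unit_group" and f: "f * f = (f::'a)"
  shows "f \<in> Delta_multipliers"
proof (rule Delta_multipliersI)
  fix x :: 'a assume x: "x \<in> Delta"
  have "(f + f - 1) * (f + f - 1) = (1::'a)"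
    using f by (simp add: algebra_simps)
  then have u: "f + f - 1 \<in> unit_group" by (rule square_eq_one_in_unit_group)
  have "2 * (f * x) = x + (f + f - 1) * x" "2 * (x * f) = x + x * (f + f - 1)"
    by (simp_all add: algebra_simps mult_2 mult_2_right mult.assoc)
  then have "2 * (f * x) \<in> Delta" "2 * (x * f) \<in> Delta"
    using Delta_add[OF x] unit_mult_Delta[OF u x] Delta_mult_unit[OF u x] by simp_all
  then show "f * x \<in> Delta \<and> x * f \<in> Delta" using Delta_halve[OF two] by blast
qed

lemma tripotent_square_idempotent:
  "(e::'a::ring_1) ^ 3 = e \<Longrightarrow> (e * e) * (e * e) = e * e"
  by (simp add: power3_eq_cube mult.assoc)

lemma tripotent_unit:
  assumes "(e::'a::ring_1) ^ 3 = e"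
  shows "e + (1 - e * e) \<in> unit_group"
proof (rule square_eq_one_in_unit_group)
  have "e * (e * e) = e" "(e * e) * e = e" using assms by (simp_all add: power3_eq_cube mult.assoc)
  with tripotent_square_idempotent[OF assms]
  show "(e + (1 - e * e)) * (e + (1 - e * e)) = 1"
    by (simp add: distrib_left distrib_right left_diff_distrib right_diff_distrib)
qed

lemma tripotent_in_Delta_multipliers:
  assumes "(2::'a::ring_1) \<in> unit_group" "(e::'a) ^ 3 = e"
  shows "e \<in> Delta_multipliers"
proof -
  have "(e + (1 - e * e)) - 1 + e * e \<in> Delta_multipliers"
    using unit_in_Delta_multipliers[OF tripotent_unit[OF assms(2)]]
      unit_in_Delta_multipliers[OF one_in_unit_group]
      idempotent_in_Delta_multipliers[OF assms(1) tripotent_square_idempotent[OF assms(2)]]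
    by (rule Delta_multipliers_add[OF Delta_multipliers_diff])
  then show ?thesis by simp
qed

lemma Delta_in_Delta_multipliers: "(d::'a::ring_1) \<in> Delta \<Longrightarrow> d \<in> Delta_multipliers"
  using Delta_multipliers_diff[OF unit_in_Delta_multipliers unit_in_Delta_multipliers,
      OF one_add_Delta_in_unit_group one_in_unit_group] by simp

lemma DT_ring_Delta_multipliers_UNIV:
  assumes "DT_ring TYPE('a::ring_1)" "(2::'a) \<in> unit_group"
  shows "(Delta_multipliers :: 'a set) = UNIV"
proof -
  have "r \<in> Delta_multipliers" for r :: 'a
  proof -
    obtain e d where "r = e + d" "e ^ 3 = e" "d \<in> Delta"
      using assms(1) unfolding DT_ring_def Tr_def by blast
    then show ?thesis
      using Delta_multipliers_add tripotent_in_Delta_multipliers[OF assms(2)]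
        Delta_in_Delta_multipliers by blast
  qed
  then show ?thesis by blast
qed

lemma DT_ring_Delta_two_sided_ideal:
  assumes "DT_ring TYPE('a::ring_1)" "(2::'a) \<in> unit_group"
  shows "two_sided_ideal (Delta :: 'a set)"
proof -
  have mult: "r * x \<in> Delta \<and> x * r \<in> Delta" if "x \<in> Delta" for r x :: 'a
    using Delta_multipliersD[OF _ that] DT_ring_Delta_multipliers_UNIV[OF assms] by blast
  have "left_ideal (Delta :: 'a set)"
    by (rule left_idealI) (simp_all add: zero_in_Delta Delta_add Delta_uminus mult)
  with mult show ?thesis unfolding two_sided_ideal_def by blast
qed

subsection \<open>The Jacobson radical\<close>

lemma maximal_left_idealD:
  assumes "maximal_left_ideal (M::'a::ring_1 set)"
  shows "left_ideal M" "M \<noteq> UNIV" "\<And>I. left_ideal I \<Longrightarrow> M \<subseteq> I \<Longrightarrow> I \<noteq> UNIV \<Longrightarrow> I = M"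
  using assms unfolding maximal_left_ideal_def by blast+

lemma jacobson_mult_left:
  assumes "(x::'a::ring_1) \<in> jacobson"
  shows "r * x \<in> jacobson"
  unfolding jacobson_def
proof
  fix M :: "'a set" assume "M \<in> {M. maximal_left_ideal M}"
  then have "maximal_left_ideal M" by simp
  moreover have "x \<in> M" using assms \<open>M \<in> _\<close> unfolding jacobson_def by blast
  ultimately show "r * x \<in> M" by (intro left_ideal_mult_left maximal_left_idealD)
qed

lemma jacobson_one_add_left_invertible:
  assumes "(y::'a::ring_1) \<in> jacobson"
  obtains a where "a * (1 + y) = 1"
proof -
  have "\<exists>a. a * (1 + y) = 1"
  proof (rule ccontr)
    assume "\<nexists>a. a * (1 + y) = 1"
    then have "1 \<notin> range (\<lambda>r. r * (1 + y))" by (metis rangeE)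
    then obtain M where M: "maximal_left_ideal M" and sub: "range (\<lambda>r. r * (1 + y)) \<subseteq> M"
      using maximal_left_ideal_exists[OF left_ideal_principal] by blast
    have I: "left_ideal M" using M by (rule maximal_left_idealD)
    have "1 * (1 + y) \<in> M" using sub by blast
    then have "1 + y \<in> M" by simp
    moreover have "y \<in> M" using assms M unfolding jacobson_def by blast
    ultimately have "(1 + y) + - y \<in> M" using left_ideal_add[OF I] left_ideal_uminus[OF I] by blast
    then have "M = UNIV" using left_ideal_unit_eq_UNIV[OF I _ one_in_unit_group] by simp
    then show False using maximal_left_idealD(2)[OF M] by blast
  qed
  with that show ?thesis by blast
qed

text \<open>A left inverse a of 1 + y is itself 1 - ay with ay \<in> J(R), so a has a left inverse b,
  and then b = b a (1 + y) = 1 + y.\<close>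
lemma jacobson_one_add_in_unit_group:
  assumes "(y::'a::ring_1) \<in> jacobson"
  shows "1 + y \<in> unit_group"
proof -
  obtain a where a: "a * (1 + y) = 1" using assms by (rule jacobson_one_add_left_invertible)
  then have a_eq: "a = 1 + - (a * y)" by (simp add: algebra_simps)
  have "- (a * y) \<in> jacobson" using jacobson_mult_left[OF assms, of "- a"] by simp
  then obtain b where "b * (1 + - (a * y)) = 1" by (rule jacobson_one_add_left_invertible)
  then have b: "b * a = 1" using a_eq by simp
  have "b = (b * a) * (1 + y)" using a by (simp add: mult.assoc)
  then have "(1 + y) * a = 1" using b by simp
  then show ?thesis using a by (rule unit_groupI)
qed

lemma jacobson_subset_Delta: "(jacobson :: 'a::ring_1 set) \<subseteq> Delta"
proof
  fix x :: 'a assume x: "x \<in> jacobson"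
  show "x \<in> Delta" unfolding Delta_def
  proof (intro CollectI ballI)
    fix u :: 'a assume u: "u \<in> unit_group"
    obtain v where v: "u * v = 1" using u by (rule unit_groupE)
    have "u * (1 + v * x) \<in> unit_group"
      using unit_group_mult[OF u jacobson_one_add_in_unit_group[OF jacobson_mult_left[OF x]]] .
    then show "x + u \<in> unit_group"
      by (simp add: distrib_left mult.assoc[symmetric] v add.commute)
  qed
qed

lemma Delta_subset_jacobson:
  assumes ideal: "left_ideal (Delta :: 'a::ring_1 set)"
  shows "(Delta :: 'a set) \<subseteq> jacobson"
proof
  fix x :: 'a assume x: "x \<in> Delta"
  show "x \<in> jacobson" unfolding jacobson_def
  proof (rule InterI, rule ccontr)
    fix M :: "'a set" assume "M \<in> {M. maximal_left_ideal M}" "x \<notin> M"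
    then have M: "maximal_left_ideal M" by simp
    then have I: "left_ideal M" by (rule maximal_left_idealD)
    let ?I = "{m + r * x | m r. m \<in> M}"
    have "M \<subseteq> ?I" by (force intro: exI[of _ 0])
    moreover have "0 + 1 * x \<in> ?I" using left_ideal_zero[OF I] by blast
    then have "?I \<noteq> M" using \<open>x \<notin> M\<close> by auto
    ultimately have "?I = UNIV"
      using maximal_left_idealD(3)[OF M left_ideal_add_principal[OF I]] by blast
    then have "1 \<in> ?I" by simp
    then obtain m r where mr: "m + r * x = 1" "m \<in> M" by auto
    have "- (r * x) \<in> Delta" using left_ideal_uminus[OF ideal left_ideal_mult_left[OF ideal x]] .
    then have "1 + - (r * x) \<in> unit_group" by (rule one_add_Delta_in_unit_group)
    moreover have "m = 1 + - (r * x)" using mr(1) by (simp add: eq_diff_eq)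
    ultimately have "m \<in> unit_group" by simp
    then show False
      using left_ideal_unit_eq_UNIV[OF I mr(2)] maximal_left_idealD(2)[OF M] by blast
  qed
qed

theorem proposition4p3:
  assumes "DT_ring TYPE('a::ring_1)"
    and "(2::'a) \<in> unit_group"
  shows "two_sided_ideal (Delta :: 'a set) \<and> (Delta :: 'a set) = jacobson"
proof -
  have "two_sided_ideal (Delta :: 'a set)" using assms by (rule DT_ring_Delta_two_sided_ideal)
  then show ?thesis
    using Delta_subset_jacobson jacobson_subset_Delta unfolding two_sided_ideal_def by blast
qed

end
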